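(* For all $i,j,k\in\{1,\dots,\ell\}$, $$[F_i,M_{jk}]=\delta_{ij}M_{j+1,k}K_i^{-2}-\delta_{ik}K_i^2M_{j,k-1}-\delta_{ij}\delta_{ik}\tfrac{K_i^2-K_i^{-2}}{q-q^{-1}},$$ $$[E_i,M_{jk}^*]=\delta_{ik}M_{j,k-1}^*K_i^2-\delta_{ij}K_i^{-2}M_{j+1,k}^*+\delta_{ij}\delta_{ik}\tfrac{K_i^2-K_i^{-2}}{q-q^{-1}},$$ where $M_{jk}:=0$ whenever $j>k$.
   Context: Fix $0<q<1$, $\ell\ge1$. In $U_q(\mathfrak{su}(\ell+1))$ (generators $K_i^{\pm1},E_i,F_i=E_i^*$, $K_i=K_i^*$, $1\le i\le\ell$, with $[K_i,K_j]=0$, $K_iE_iK_i^{-1}=qE_i$, $K_iE_jK_i^{-1}=q^{-1/2}E_j$ if $|i-j|=1$, $=E_j$ if $|i-j|>1$, $[E_i,F_j]=\delta_{ij}\frac{K_i^2-K_i^{-2}}{q-q^{-1}}$, $E_i^2E_j-(q+q^{-1})E_iE_jE_i+E_jE_i^2=0$ for $|i-j|=1$, $[E_i,E_j]=0$ for $|i-j|>1$, plus adjoints) set $[a,b]_q:=ab-q^{-1}ba$, $M_{ii}:=E_i$ and $M_{jk}:=[E_j,M_{j+1,k}]_q$ for $j<k$. *)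

theory Defs
  imports Complex_Main
begin

definition qcomm :: "real \<Rightarrow> 'a::real_algebra_1 \<Rightarrow> 'a \<Rightarrow> 'a" where
  "qcomm q a b = a * b - (1 / q) *\<^sub>R (b * a)"

function Mq :: "(nat \<Rightarrow> 'a::real_algebra_1) \<Rightarrow> real \<Rightarrow> nat \<Rightarrow> nat \<Rightarrow> 'a" where
  "Mq E q j k = (if k < j then 0 else if j = k then E j
                 else qcomm q (E j) (Mq E q (Suc j) k))"
  by pat_completeness auto
termination by (relation "measure (\<lambda>(E, q, j, k). k - j)") auto

text \<open>Elements E_i, K_i, K_i^{-1} (1 \<le> i \<le> l) of a *-algebra over the reals (U_q as a real *-algebra) (with
  involution st) satisfying the defining relations of U_q(su(l+1)), with F_i = E_i^*.
  The adjoint relations follow from st being an involutive anti-homomorphism.\<close>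
definition Uq_su_rels ::
  "nat \<Rightarrow> real \<Rightarrow> ('a::real_algebra_1 \<Rightarrow> 'a) \<Rightarrow> (nat \<Rightarrow> 'a) \<Rightarrow> (nat \<Rightarrow> 'a) \<Rightarrow> (nat \<Rightarrow> 'a) \<Rightarrow> bool" where
  "Uq_su_rels l q st E K Kinv \<longleftrightarrow>
     (\<forall>x. st (st x) = x) \<and>
     (\<forall>x y. st (x + y) = st x + st y) \<and>
     (\<forall>x y. st (x * y) = st y * st x) \<and>
     (\<forall>c x. st (c *\<^sub>R x) = c *\<^sub>R st x) \<and>
     (\<forall>i\<in>{1..l}. st (K i) = K i) \<and>
     (\<forall>i\<in>{1..l}. K i * Kinv i = 1 \<and> Kinv i * K i = 1) \<and>
     (\<forall>i\<in>{1..l}. \<forall>j\<in>{1..l}. K i * K j = K j * K i) \<and>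
     (\<forall>i\<in>{1..l}. K i * E i * Kinv i = q *\<^sub>R E i) \<and>
     (\<forall>i\<in>{1..l}. \<forall>j\<in>{1..l}. (i = Suc j \<or> j = Suc i) \<longrightarrow>
          K i * E j * Kinv i = (q powr (-1/2)) *\<^sub>R E j) \<and>
     (\<forall>i\<in>{1..l}. \<forall>j\<in>{1..l}. (Suc i < j \<or> Suc j < i) \<longrightarrow>
          K i * E j * Kinv i = E j) \<and>
     (\<forall>i\<in>{1..l}. \<forall>j\<in>{1..l}.
          E i * st (E j) - st (E j) * E i =
          (if i = j then (1 / (q - 1/q)) *\<^sub>R (K i ^ 2 - Kinv i ^ 2) else 0)) \<and>
     (\<forall>i\<in>{1..l}. \<forall>j\<in>{1..l}. (i = Suc j \<or> j = Suc i) \<longrightarrow>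
          E i ^ 2 * E j - (q + 1/q) *\<^sub>R (E i * E j * E i) + E j * E i ^ 2 = 0) \<and>
     (\<forall>i\<in>{1..l}. \<forall>j\<in>{1..l}. (Suc i < j \<or> Suc j < i) \<longrightarrow>
          E i * E j = E j * E i)"

end

theory Submission imports Defs begin

(* Since [F_i, -] is a derivation and [-,-]_q is bilinear,
     [F_i, M_jk] = [[F_i, E_j], M_(j+1)k]_q + [E_j, [F_i, M_(j+1)k]]_q,
   and the first identity follows by induction on k - j.  As [F_i, E_j] = 0 for i ~= j, only a few
   terms survive, and they are evaluated with the K-weights: K_i^2 and K_i^-2 rescale an element of
   weight adjacent to i (E_(i-1), E_(i+1) or M_(i+1)k) by q^-1 resp. q, so a q-commutator of such an
   element with K_i^2 - K_i^-2 is a single term times q - q^-1, cancelling the denominator.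
   The second identity is the image of the first under the involutive anti-automorphism *. *)

declare Mq.simps [simp del]

definition commutator :: "'a::ring \<Rightarrow> 'a \<Rightarrow> 'a" where
  "commutator a b = a * b - b * a"

lemma commutator_qcomm:
  fixes x a b :: "'a::real_algebra_1"
  shows "commutator x (qcomm q a b) = qcomm q (commutator x a) b + qcomm q a (commutator x b)"
  by (simp add: commutator_def qcomm_def algebra_simps)

lemma qcomm_0_left [simp]: "qcomm q 0 b = 0"
  and qcomm_0_right [simp]: "qcomm q a 0 = 0"
  by (simp_all add: qcomm_def)

lemma qcomm_minus_left: "qcomm q (- a) b = - qcomm q a b"
  and qcomm_minus_right: "qcomm q a (- b) = - qcomm q a b"
  and qcomm_scaleR_left: "qcomm q (c *\<^sub>R a) b = c *\<^sub>R qcomm q a b"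
  and qcomm_scaleR_right: "qcomm q a (c *\<^sub>R b) = c *\<^sub>R qcomm q a b"
  by (simp_all add: qcomm_def scaleR_right_diff_distrib)

lemma qcomm_mult_right_commuting:
  fixes a b x :: "'a::real_algebra_1"
  assumes "a * x = x * a"
  shows "qcomm q a (x * b) = x * qcomm q a b"
proof -
  have "a * (x * b) = x * (a * b)" by (metis assms mult.assoc)
  then show ?thesis by (simp add: qcomm_def algebra_simps)
qed

lemma qcomm_mult_right_eq_0:
  fixes a b v :: "'a::real_algebra_1"
  assumes "a * b = b * a" and "v * a = q *\<^sub>R (a * v)" and "q \<noteq> 0"
  shows "qcomm q a (b * v) = 0"
proof -
  have "b * v * a = q *\<^sub>R (a * b * v)"
    by (simp add: mult.assoc assms(2)) (simp add: assms(1) flip: mult.assoc)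
  then show ?thesis using assms(3) by (simp add: qcomm_def mult.assoc)
qed

lemma scaled_commute_qcomm:
  fixes x a b :: "'a::real_algebra_1"
  assumes a: "x * a = c *\<^sub>R (a * x)" and b: "x * b = d *\<^sub>R (b * x)"
  shows "x * qcomm q a b = (c * d) *\<^sub>R (qcomm q a b * x)"
proof -
  have ab: "x * (a * b) = (c * d) *\<^sub>R (a * b * x)"
    by (simp add: a b flip: mult.assoc) (simp add: mult.assoc b)
  have ba: "x * (b * a) = (c * d) *\<^sub>R (b * a * x)"
    by (simp add: a b flip: mult.assoc) (simp add: mult.assoc a)
  show ?thesis
    by (simp add: qcomm_def right_diff_distrib left_diff_distrib ab ba
        scaleR_right_diff_distrib mult.commute)
qed

lemma scaled_commute_power:
  fixes x a :: "'a::real_algebra_1"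
  assumes "x * a = c *\<^sub>R (a * x)"
  shows "x ^ n * a = c ^ n *\<^sub>R (a * x ^ n)"
proof (induction n)
  case (Suc n)
  have "x ^ Suc n * a = x * (x ^ n * a)" by (simp add: mult.assoc)
  also have "\<dots> = c ^ n *\<^sub>R ((x * a) * x ^ n)" by (simp add: Suc mult.assoc)
  also have "\<dots> = c ^ Suc n *\<^sub>R (a * x ^ Suc n)" by (simp add: assms mult.assoc)
  finally show ?case .
qed simp

lemma scaled_commute_inverse:
  fixes x y a :: "'a::real_algebra_1"
  assumes "x * a = c *\<^sub>R (a * x)" and "x * y = 1" and "y * x = 1" and "c \<noteq> 0"
  shows "y * a = (1 / c) *\<^sub>R (a * y)"
proof -
  have "a * y = y * (x * a) * y" by (simp add: assms(3) flip: mult.assoc)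
  also have "\<dots> = c *\<^sub>R (y * a)" by (simp add: assms(1,2) mult.assoc)
  finally show ?thesis using assms(4) by simp
qed

lemma scaled_commute_of_conjugate:
  fixes x y a :: "'a::real_algebra_1"
  assumes "x * a * y = c *\<^sub>R a" and "y * x = 1"
  shows "x * a = c *\<^sub>R (a * x)"
proof -
  have "x * a = x * a * y * x" by (simp add: assms(2) mult.assoc)
  then show ?thesis by (simp add: assms(1))
qed

lemma qcomm_weighted_diff_left:
  fixes u v x :: "'a::real_algebra_1"
  assumes "u * x = (1 / q) *\<^sub>R (x * u)" and "v * x = q *\<^sub>R (x * v)"
  shows "qcomm q (u - v) x = - ((q - 1 / q) *\<^sub>R (x * v))"
  using assms by (simp add: qcomm_def algebra_simps)

lemma qcomm_weighted_diff_right: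
  fixes u v x :: "'a::real_algebra_1"
  assumes "u * x = (1 / q) *\<^sub>R (x * u)" and "v * x = q *\<^sub>R (x * v)" and "q \<noteq> 0"
  shows "qcomm q x (u - v) = (q - 1 / q) *\<^sub>R (u * x)"
proof -
  have "x * u = q *\<^sub>R (u * x)" using assms(1,3) by simp
  then show ?thesis using assms by (simp add: qcomm_def algebra_simps)
qed

lemma Mq_empty: "k < j \<Longrightarrow> Mq E q j k = 0"
  by (simp add: Mq.simps)

lemma Mq_diag: "Mq E q j j = E j"
  by (simp add: Mq.simps)

lemma Mq_step: "j < k \<Longrightarrow> Mq E q j k = qcomm q (E j) (Mq E q (Suc j) k)"
  by (subst Mq.simps) simp

lemma Mq_commute:
  assumes "\<And>m. j \<le> m \<Longrightarrow> m \<le> k \<Longrightarrow> x * E m = E m * x"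
  shows "x * Mq E q j k = Mq E q j k * x"
  using assms
proof (induction E q j k rule: Mq.induct)
  case (1 E q j k)
  consider "k < j" | "j = k" | "j < k" by linarith
  then show ?case
  proof cases
    case 3
    have "x * E j = 1 *\<^sub>R (E j * x)" and "x * Mq E q (Suc j) k = 1 *\<^sub>R (Mq E q (Suc j) k * x)"
      using 1 3 by auto
    from scaled_commute_qcomm[OF this] show ?thesis using 3 by (simp add: Mq_step)
  qed (simp_all add: Mq_empty Mq_diag 1)
qed

lemma Mq_scaled_commute:
  assumes "j \<le> k" and "x * E j = c *\<^sub>R (E j * x)"
    and "\<And>m. j < m \<Longrightarrow> m \<le> k \<Longrightarrow> x * E m = E m * x"
  shows "x * Mq E q j k = c *\<^sub>R (Mq E q j k * x)"
proof (cases "j = k")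
  case False
  have "x * Mq E q (Suc j) k = 1 *\<^sub>R (Mq E q (Suc j) k * x)"
    using Mq_commute[of "Suc j" k x] assms(3) by simp
  from scaled_commute_qcomm[OF assms(2) this] show ?thesis
    using assms(1) False by (simp add: Mq_step)
qed (use assms(2) in \<open>simp add: Mq_diag\<close>)

context
  fixes l :: nat and q :: real and st :: "'a::real_algebra_1 \<Rightarrow> 'a"
    and E K Kinv :: "nat \<Rightarrow> 'a"
  assumes rels: "Uq_su_rels l q st E K Kinv" and q_pos: "0 < q" and q_less_1: "q < 1"
begin

lemma K_Kinv: "i \<in> {1..l} \<Longrightarrow> K i * Kinv i = 1"
  and Kinv_K: "i \<in> {1..l} \<Longrightarrow> Kinv i * K i = 1"
  using rels unfolding Uq_su_rels_def by meson+

lemma commutator_F_E: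
  "i \<in> {1..l} \<Longrightarrow> m \<in> {1..l} \<Longrightarrow> commutator (st (E i)) (E m) =
     (if i = m then - ((1 / (q - 1/q)) *\<^sub>R (K i ^ 2 - Kinv i ^ 2)) else 0)"
proof -
  assume "i \<in> {1..l}" "m \<in> {1..l}"
  moreover have "\<forall>i\<in>{1..l}. \<forall>j\<in>{1..l}. E i * st (E j) - st (E j) * E i =
      (if i = j then (1 / (q - 1/q)) *\<^sub>R (K i ^ 2 - Kinv i ^ 2) else 0)"
    using rels unfolding Uq_su_rels_def by (elim conjE) assumption
  ultimately have "E m * st (E i) - st (E i) * E m =
      (if i = m then (1 / (q - 1/q)) *\<^sub>R (K i ^ 2 - Kinv i ^ 2) else 0)"
    by auto
  moreover have "commutator (st (E i)) (E m) = - (E m * st (E i) - st (E i) * E m)"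
    by (simp add: commutator_def)
  ultimately show ?thesis by simp
qed

lemma E_commute_far:
  "i \<in> {1..l} \<Longrightarrow> m \<in> {1..l} \<Longrightarrow> Suc i < m \<or> Suc m < i \<Longrightarrow> E i * E m = E m * E i"
  using rels unfolding Uq_su_rels_def by meson

lemma K_E_commute_far:
  assumes "i \<in> {1..l}" "m \<in> {1..l}" "Suc i < m \<or> Suc m < i"
  shows "K i * E m = E m * K i"
proof -
  have "K i * E m * Kinv i = E m"
    using rels assms unfolding Uq_su_rels_def by meson
  then have "K i * E m * Kinv i = 1 *\<^sub>R E m" by simp
  from scaled_commute_of_conjugate[OF this Kinv_K[OF assms(1)]] show ?thesis by simp
qed

lemma K_E_adjacent:
  assumes "i \<in> {1..l}" "m \<in> {1..l}" "i = Suc m \<or> m = Suc i"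
  shows "K i * E m = q powr (-1/2) *\<^sub>R (E m * K i)"
proof -
  have "K i * E m * Kinv i = q powr (-1/2) *\<^sub>R E m"
    using rels assms unfolding Uq_su_rels_def by metis
  from scaled_commute_of_conjugate[OF this Kinv_K[OF assms(1)]] show ?thesis .
qed

lemma K_squares_adjacent:
  assumes "i \<in> {1..l}" and "K i * x = q powr (-1/2) *\<^sub>R (x * K i)"
  shows "K i ^ 2 * x = (1 / q) *\<^sub>R (x * K i ^ 2)"
    and "Kinv i ^ 2 * x = q *\<^sub>R (x * Kinv i ^ 2)"
proof -
  have sq: "(q powr (-1/2)) ^ 2 = 1 / q"
    using q_pos by (simp add: powr_minus_divide powr_half_sqrt power_divide)
  show "K i ^ 2 * x = (1 / q) *\<^sub>R (x * K i ^ 2)"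
    using scaled_commute_power[OF assms(2), of 2] sq by simp
  have "Kinv i * x = (1 / q powr (-1/2)) *\<^sub>R (x * Kinv i)"
    using scaled_commute_inverse[OF assms(2) K_Kinv Kinv_K] assms(1) q_pos by simp
  from scaled_commute_power[OF this, of 2] show "Kinv i ^ 2 * x = q *\<^sub>R (x * Kinv i ^ 2)"
    using sq q_pos by (simp add: power_one_over)
qed

lemma q_minus_inverse_nonzero: "q - 1 / q \<noteq> 0"
proof -
  have "q * q < 1" using mult_strict_mono[of q 1 q 1] q_pos q_less_1 by simp
  then show ?thesis using q_pos by (auto simp: field_simps)
qed

lemma F_commute_Mq:
  assumes "i \<in> {1..l}" "1 \<le> j" "k \<le> l" "i < j \<or> k < i"
  shows "st (E i) * Mq E q j k = Mq E q j k * st (E i)"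
proof (rule Mq_commute)
  fix m assume "j \<le> m" "m \<le> k"
  then have "commutator (st (E i)) (E m) = 0"
    using assms commutator_F_E[of i m] by auto
  then show "st (E i) * E m = E m * st (E i)" by (simp add: commutator_def)
qed

lemma commutator_F_Mq_first:
  assumes "i \<in> {1..l}" "i < k" "k \<le> l"
  shows "commutator (st (E i)) (Mq E q i k) = Mq E q (Suc i) k * Kinv i ^ 2"
proof -
  define M where "M = Mq E q (Suc i) k"
  have "K i * M = q powr (-1/2) *\<^sub>R (M * K i)"
    unfolding M_def
  proof (rule Mq_scaled_commute)
    show "K i * E (Suc i) = q powr (-1/2) *\<^sub>R (E (Suc i) * K i)"
      using assms by (intro K_E_adjacent) auto
    show "K i * E m = E m * K i" if "Suc i < m" "m \<le> k" for m
      using assms that by (intro K_E_commute_far) auto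
  qed (use assms in simp)
  note weights = K_squares_adjacent[OF assms(1) this]
  have "commutator (st (E i)) M = 0"
    using F_commute_Mq[of i "Suc i" k] assms unfolding M_def commutator_def by auto
  then have "commutator (st (E i)) (Mq E q i k) = qcomm q (commutator (st (E i)) (E i)) M"
    using assms by (simp add: M_def Mq_step commutator_qcomm)
  also have "\<dots> = (1 / (q - 1/q)) *\<^sub>R ((q - 1/q) *\<^sub>R (M * Kinv i ^ 2))"
    using assms by (simp add: commutator_F_E qcomm_minus_left qcomm_scaleR_left
        qcomm_weighted_diff_left[OF weights])
  also have "\<dots> = M * Kinv i ^ 2"
    using q_minus_inverse_nonzero by simp
  finally show ?thesis unfolding M_def .
qed

lemma commutator_F_Mq_shift:
  assumes "i \<in> {1..l}" "j \<in> {1..l}" "i \<noteq> j" "j < k"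
  shows "commutator (st (E i)) (Mq E q j k) =
    qcomm q (E j) (commutator (st (E i)) (Mq E q (Suc j) k))"
  using assms by (simp add: Mq_step commutator_qcomm commutator_F_E)

lemma qcomm_E_Cartan_adjacent:
  assumes "j \<in> {1..l}" "Suc j \<le> l"
  shows "qcomm q (E j) (- ((1 / (q - 1/q)) *\<^sub>R (K (Suc j) ^ 2 - Kinv (Suc j) ^ 2))) =
    - (K (Suc j) ^ 2 * E j)"
proof -
  have "K (Suc j) * E j = q powr (-1/2) *\<^sub>R (E j * K (Suc j))"
    using assms by (intro K_E_adjacent) auto
  note weights = K_squares_adjacent[OF _ this]
  show ?thesis
    using assms q_minus_inverse_nonzero q_pos
    by (simp add: qcomm_minus_right qcomm_scaleR_right qcomm_weighted_diff_right[OF weights])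
qed

lemma commutator_F_Mq:
  assumes "i \<in> {1..l}" "j \<in> {1..l}" "k \<in> {1..l}"
  shows "commutator (st (E i)) (Mq E q j k) =
           (if i = j then Mq E q (Suc j) k * Kinv i ^ 2 else 0)
         - (if i = k then K i ^ 2 * Mq E q j (k - 1) else 0)
         - (if i = j \<and> i = k then (1 / (q - 1/q)) *\<^sub>R (K i ^ 2 - Kinv i ^ 2) else 0)"
proof (cases "j \<le> k")
  case False
  then show ?thesis by (auto simp: Mq_empty commutator_def)
next
  case True
  then show ?thesis
    using assms(1,2)
  proof (induction j arbitrary: i rule: inc_induct)
    case base
    then show ?case by (simp add: Mq_diag Mq_empty commutator_F_E)
  next
    case (step j)
    show ?case
    proof (cases "i = j")
      case True
      then show ?thesis using step assms(3) by (simp add: commutator_F_Mq_first)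
    next
      case i_ne_j: False
      have j1: "Suc j \<in> {1..l}" using step assms(3) by simp
      have shift: "commutator (st (E i)) (Mq E q j k) =
        qcomm q (E j) (commutator (st (E i)) (Mq E q (Suc j) k))"
        using commutator_F_Mq_shift step i_ne_j by blast
      note IH = step.IH[OF step.prems(1) j1]
      consider "i = k" "k = Suc j" | "i = k" "Suc j < k" | "i = Suc j" "i \<noteq> k"
        | "i \<noteq> Suc j" "i \<noteq> k"
        using step by linarith
      then show ?thesis
      proof cases
        case 1
        then show ?thesis
          using shift IH qcomm_E_Cartan_adjacent[of j] step j1
          by (simp add: Mq_empty Mq_diag)
      next
        case 2
        have "K i * E j = 1 *\<^sub>R (E j * K i)"
          using step 2 by (simp add: K_E_commute_far)
        from scaled_commute_power[OF this, of 2]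
        have "E j * K i ^ 2 = K i ^ 2 * E j" by simp
        then show ?thesis
          using shift IH 2 i_ne_j
          by (simp add: qcomm_minus_right qcomm_mult_right_commuting Mq_step)
      next
        case 3
        have "K i * E j = q powr (-1/2) *\<^sub>R (E j * K i)"
          using step 3 by (intro K_E_adjacent) auto
        note weights = K_squares_adjacent[OF step.prems(1) this]
        have "E j * Mq E q (Suc (Suc j)) k = Mq E q (Suc (Suc j)) k * E j"
          using step assms(3) by (intro Mq_commute E_commute_far) auto
        from qcomm_mult_right_eq_0[OF this weights(2)] show ?thesis
          using shift IH 3 i_ne_j q_pos by simp
      next
        case 4
        then show ?thesis using shift IH i_ne_j by simp
      qed
    qed
  qed
qed

lemma linear_st: "linear st"
  using rels unfolding Uq_su_rels_def by (intro linearI) meson+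

lemma st_st [simp]: "st (st x) = x"
  and st_mult: "st (x * y) = st y * st x"
  and st_K: "i \<in> {1..l} \<Longrightarrow> st (K i) = K i"
  using rels unfolding Uq_su_rels_def by meson+

lemma st_1: "st 1 = 1"
  using st_mult[of "st 1" 1] by simp

lemma st_power: "st (x ^ n) = st x ^ n"
  by (induction n) (simp_all add: st_1 st_mult power_commutes)

lemma st_Kinv:
  assumes "i \<in> {1..l}"
  shows "st (Kinv i) = Kinv i"
proof -
  have left_inverse: "st (Kinv i) * K i = 1"
    using arg_cong[OF K_Kinv[OF assms], of st] by (simp add: st_mult st_K[OF assms] st_1)
  have "st (Kinv i) = st (Kinv i) * (K i * Kinv i)"
    by (simp add: K_Kinv[OF assms])
  also have "\<dots> = Kinv i"
    by (simp add: left_inverse flip: mult.assoc)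
  finally show ?thesis .
qed

lemma st_commutator: "st (commutator a b) = commutator (st b) (st a)"
  by (simp add: commutator_def linear_diff[OF linear_st] st_mult)

lemma commutator_E_st_Mq:
  assumes "i \<in> {1..l}" "j \<in> {1..l}" "k \<in> {1..l}"
  shows "commutator (E i) (st (Mq E q j k)) =
           (if i = k then st (Mq E q j (k - 1)) * K i ^ 2 else 0)
         - (if i = j then Kinv i ^ 2 * st (Mq E q (Suc j) k) else 0)
         + (if i = j \<and> i = k then (1 / (q - 1/q)) *\<^sub>R (K i ^ 2 - Kinv i ^ 2) else 0)"
proof -
  have "commutator (E i) (st (Mq E q j k)) = - st (commutator (st (E i)) (Mq E q j k))"
    unfolding st_commutator by (simp add: commutator_def)
  also have "\<dots> =
           (if i = k then st (Mq E q j (k - 1)) * K i ^ 2 else 0)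
         - (if i = j then Kinv i ^ 2 * st (Mq E q (Suc j) k) else 0)
         + (if i = j \<and> i = k then (1 / (q - 1/q)) *\<^sub>R (K i ^ 2 - Kinv i ^ 2) else 0)"
    using assms(1)
    by (simp add: commutator_F_Mq[OF assms] linear_diff[OF linear_st] linear_0[OF linear_st]
        linear_scale[OF linear_st] st_mult st_power st_K st_Kinv)
  finally show ?thesis .
qed

end

theorem lemma3p1:
  fixes l :: nat and q :: real and st :: "'a::real_algebra_1 \<Rightarrow> 'a"
    and E K Kinv :: "nat \<Rightarrow> 'a"
  assumes "0 < q" and "q < 1" and "1 \<le> l"
    and "Uq_su_rels l q st E K Kinv"
    and "i \<in> {1..l}" and "j \<in> {1..l}" and "k \<in> {1..l}"
  shows "(st (E i) * Mq E q j k - Mq E q j k * st (E i) =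
           (if i = j then Mq E q (Suc j) k * Kinv i ^ 2 else 0)
         - (if i = k then K i ^ 2 * Mq E q j (k - 1) else 0)
         - (if i = j \<and> i = k then (1 / (q - 1/q)) *\<^sub>R (K i ^ 2 - Kinv i ^ 2) else 0)) \<and>
         (E i * st (Mq E q j k) - st (Mq E q j k) * E i =
           (if i = k then st (Mq E q j (k - 1)) * K i ^ 2 else 0)
         - (if i = j then Kinv i ^ 2 * st (Mq E q (Suc j) k) else 0)
         + (if i = j \<and> i = k then (1 / (q - 1/q)) *\<^sub>R (K i ^ 2 - Kinv i ^ 2) else 0))"
  using commutator_F_Mq[OF assms(4,1,2) assms(5-7)] commutator_E_st_Mq[OF assms(4,1,2) assms(5-7)]
  unfolding commutator_def by (rule conjI)

end
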